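(* Let $0<p<q$ be relatively prime integers and let $\mathcal{G}$ be the Markov snake graph of slope $p/q$. Then $\mathcal{G}$ has a rotational symmetry at its center tile. Moreover: (1) $\mathcal{G}$ has exactly $p$ horizontal segments, and there are positive integers $\nu_1,\dots,\nu_p$ with $|\nu_i-\nu_j|\le1$ for all $i\ne j$ such that the $i$-th horizontal segment has exactly $2(\nu_i-1)+3$ tiles; (2) $\mathcal{G}$ has exactly $p-1$ vertical segments, each of which has exactly $3$ tiles.
   Context: A tile is a unit square in the plane with sides parallel to the axes, viewed as a graph with 4 vertices and 4 edges. A snake graph with $d\ge1$ tiles is the union of tiles $G_1,\dots,G_d$ with each $G_{i+1}$ the translate of $G_i$ by $(0,1)$ or $(1,0)$, so that $G_i,G_{i+1}$ share exactly one edge $e_i$. A sign function on a snake graph is a map $f$ from edges to $\{+,-\}$ such that in each tile the north and west edges have the same sign, the south and east edges have the same sign, and north and south edges have opposite signs. For positive integers $a_1,\dots,a_n$ with $d=a_1+\dots+a_n-1\ge1$, $\mathcal{G}[a_1,\dots,a_n]$ is the unique snake graph with tiles $G_1,\dots,G_d$ admitting a sign function $f$ and an edge $e_d\in\{\text{north edge of }G_d,\text{east edge of }G_d\}$ such that, with $e_0$ the south edge of $G_1$, the sequence $(f(e_0),\dots,f(e_d))$ consists of $a_1$ copies of a sign $s$, then $a_2$ copies of $-s$, then $a_3$ copies of $s$, etc. For relatively prime integers $0<p<q$ put $v_i=\lfloor iq/p\rfloor-\lfloor (i-1)q/p\rfloor$ for $1\le i\le p-1$ and $v_p=q-1-\lfloor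 (p-1)q/p\rfloor$. The Markov snake graph of slope $p/q$ is $\mathcal{G}[c]$, where $c$ is the sequence $2,\,1^{2(v_1-1)},\,2,2,\,1^{2(v_2-1)},\,2,2,\dots,2,2,\,1^{2(v_p-1)},\,2$ ($1^k$ denotes $k$ consecutive entries equal to 1). A snake graph has a rotational symmetry at its center tile if some tile $G_i$ is such that rotation by $180^\circ$ about the center of $G_i$ maps the graph onto itself. A horizontal (resp. vertical) segment is a maximal run $G_j,G_{j+1},\dots,G_k$ of at least two consecutive tiles such that each $G_{l+1}$ ($j\le l<k$) is east (resp. north) of $G_l$; segments are ordered along the snake graph. *)

theory Defs
  imports Main "HOL-Library.Product_Lexorder"
begin

text \<open>A point of the integer lattice; a tile is identified by its lower-left corner.
  An edge is a unit segment, stored as the pair of its endpoints with the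
  lower/left endpoint first.\<close>

type_synonym point = "int \<times> int"
type_synonym edge = "point \<times> point"

definition south :: "point \<Rightarrow> edge" where
  "south t = ((fst t, snd t), (fst t + 1, snd t))"
definition north :: "point \<Rightarrow> edge" where
  "north t = ((fst t, snd t + 1), (fst t + 1, snd t + 1))"
definition west :: "point \<Rightarrow> edge" where
  "west t = ((fst t, snd t), (fst t, snd t + 1))"
definition east :: "point \<Rightarrow> edge" where
  "east t = ((fst t + 1, snd t), (fst t + 1, snd t + 1))"

definition tile_edges :: "point \<Rightarrow> edge set" where
  "tile_edges t = {south t, north t, west t, east t}"

definition north_of :: "point \<Rightarrow> point" where
  "north_of t = (fst t, snd t + 1)"
definition east_of :: "point \<Rightarrow> point" where
  "east_of t = (fst t + 1, snd t)"

text \<open>A snake graph with d = length ts tiles G_1,...,G_d (G_i = ts ! (i-1)):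
  each tile is the translate of the previous by (0,1) or (1,0).\<close>
definition snake :: "point list \<Rightarrow> bool" where
  "snake ts \<longleftrightarrow> ts \<noteq> [] \<and>
     (\<forall>i. Suc i < length ts \<longrightarrow> ts ! Suc i = north_of (ts ! i) \<or> ts ! Suc i = east_of (ts ! i))"

definition snake_edges :: "point list \<Rightarrow> edge set" where
  "snake_edges ts = (\<Union>t\<in>set ts. tile_edges t)"

definition shared_edge :: "point \<Rightarrow> point \<Rightarrow> edge" where
  "shared_edge t t' = (if t' = north_of t then north t else east t)"

text \<open>Sign function: signs + / - encoded as True / False.\<close>
definition sign_function :: "point list \<Rightarrow> (edge \<Rightarrow> bool) \<Rightarrow> bool" where
  "sign_function ts f \<longleftrightarrow> (\<forall>t\<in>set ts.
      f (north t) = f (west t) \<and> f (south t) = f (east t) \<and> f (north t) \<noteq> f (south t))"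

definition edge_seq :: "point list \<Rightarrow> edge \<Rightarrow> edge list" where
  "edge_seq ts ed = [south (hd ts)] @ map (\<lambda>i. shared_edge (ts ! i) (ts ! Suc i)) [0..<length ts - 1] @ [ed]"

definition sign_pattern :: "bool \<Rightarrow> nat list \<Rightarrow> bool list" where
  "sign_pattern s a = concat (map (\<lambda>k. replicate (a ! k) (if even k then s else \<not> s)) [0..<length a])"

text \<open>ts is (a translate of) the snake graph G[a_1,...,a_n].\<close>
definition is_snake_of_cf :: "nat list \<Rightarrow> point list \<Rightarrow> bool" where
  "is_snake_of_cf a ts \<longleftrightarrow> snake ts \<and> (\<forall>x\<in>set a. x > 0) \<and>
     length ts = sum_list a - 1 \<and> length ts \<ge> 1 \<and>
     (\<exists>f ed s. sign_function ts f \<and> ed \<in> {north (last ts), east (last ts)} \<and>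
        map f (edge_seq ts ed) = sign_pattern s a)"

definition markov_v :: "nat \<Rightarrow> nat \<Rightarrow> nat \<Rightarrow> nat" where
  "markov_v p q i = (if i < p then i * q div p - (i - 1) * q div p
                     else q - 1 - (p - 1) * q div p)"

definition markov_cf :: "nat \<Rightarrow> nat \<Rightarrow> nat list" where
  "markov_cf p q = concat (map (\<lambda>i. [2] @ replicate (2 * (markov_v p q i - 1)) 1 @ [2]) [1..<Suc p])"

definition markov_snake :: "nat \<Rightarrow> nat \<Rightarrow> point list \<Rightarrow> bool" where
  "markov_snake p q ts \<longleftrightarrow> is_snake_of_cf (markov_cf p q) ts"

text \<open>Rotation by 180 degrees about the centre of the tile with lower-left corner c.\<close>
definition rot180 :: "point \<Rightarrow> point \<Rightarrow> point" where
  "rot180 c v = (2 * fst c + 1 - fst v, 2 * snd c + 1 - snd v)"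

definition rot180_edge :: "point \<Rightarrow> edge \<Rightarrow> edge" where
  "rot180_edge c e = (rot180 c (snd e), rot180 c (fst e))"

definition rotationally_symmetric_at_tile :: "point list \<Rightarrow> bool" where
  "rotationally_symmetric_at_tile ts \<longleftrightarrow>
     (\<exists>i < length ts. rot180_edge (ts ! i) ` snake_edges ts = snake_edges ts)"

text \<open>Horizontal (vertical) segments, as pairs (j,k) of 0-based tile indices:
  maximal runs ts!j, ..., ts!k with k > j, each step going east (north).\<close>
definition segments :: "(point \<Rightarrow> point) \<Rightarrow> point list \<Rightarrow> (nat \<times> nat) set" where
  "segments step ts = {(j, k). j < k \<and> k < length ts \<and>
      (\<forall>l. j \<le> l \<and> l < k \<longrightarrow> ts ! Suc l = step (ts ! l)) \<and>
      (j = 0 \<or> ts ! j \<noteq> step (ts ! (j - 1))) \<and>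
      (Suc k = length ts \<or> ts ! Suc k \<noteq> step (ts ! k))}"

definition hsegments :: "point list \<Rightarrow> (nat \<times> nat) set" where
  "hsegments ts = segments east_of ts"
definition vsegments :: "point list \<Rightarrow> (nat \<times> nat) set" where
  "vsegments ts = segments north_of ts"

definition seg_list :: "(nat \<times> nat) set \<Rightarrow> (nat \<times> nat) list" where
  "seg_list S = sorted_list_of_set S"
definition seg_tiles :: "nat \<times> nat \<Rightarrow> nat" where
  "seg_tiles jk = snd jk - fst jk + 1"

end

theory Submission
  imports Defs
begin

text \<open>Two consecutive edges e_i, e_(i+1) of a tile carry the same sign exactly when one of
  them is vertical, i.e. when the snake graph turns at that tile. Hence the sign sequence of
  G[a_1, ..., a_n] determines the shape of the snake graph. For the Markov sequence
  2, 1^(2(v_1 - 1)), 2, ..., 2, 1^(2(v_p - 1)), 2 the successive steps form the word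
  E^(2 v_1) N N E^(2 v_2) N N ... N N E^(2 v_p), so there are p horizontal segments with
  2 v_i + 1 tiles and p - 1 vertical segments with 3 tiles. Each v_i is a difference of
  consecutive values of floor(i q / p), hence equals floor(q / p) or floor(q / p) + 1; coprimality
  gives floor(i q / p) + floor((p - i) q / p) = q - 1, which makes v_1, ..., v_p a palindrome.
  A snake graph with an odd number of tiles and a palindromic step word is invariant under the
  rotation by 180 degrees about its middle tile.\<close>

section \<open>Sign sequences determine snake graphs\<close>

lemma sign_pattern_Nil [simp]: "sign_pattern s [] = []"
  by (simp add: sign_pattern_def)

lemma sign_pattern_Cons:
  "sign_pattern s (x # xs) = replicate x s @ sign_pattern (\<not> s) xs"
proof -
  have "[0..<length (x # xs)] = 0 # map Suc [0..<length xs]"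
    by (simp add: upt_conv_Cons map_Suc_upt del: upt_Suc)
  then show ?thesis
    unfolding sign_pattern_def
    by (simp add: comp_def del: upt_Suc) (intro arg_cong[where f = concat] map_cong; simp)
qed

lemma length_sign_pattern: "length (sign_pattern s a) = sum_list a"
  by (induction a arbitrary: s) (auto simp: sign_pattern_Cons)

text \<open>Given the sign x of the edge through which a tile is entered, whether that edge is
  vertical (d), and the signs of the successive exit edges, compute the successive exit
  directions (True = east).\<close>
fun dirs_from_signs :: "bool \<Rightarrow> bool \<Rightarrow> bool list \<Rightarrow> bool list" where
  "dirs_from_signs d x [] = []"
| "dirs_from_signs d x (y # ys) = (d \<noteq> (x = y)) # dirs_from_signs (d \<noteq> (x = y)) y ys"

lemma length_dirs_from_signs [simp]: "length (dirs_from_signs d x ys) = length ys"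
  by (induction ys arbitrary: d x) auto

lemma nth_dirs_from_signs:
  "i < length ys \<Longrightarrow> dirs_from_signs d x ys ! i =
     ((if i = 0 then d else dirs_from_signs d x ys ! (i - 1)) \<noteq> ((x # ys) ! i = ys ! i))"
proof (induction ys arbitrary: d x i)
  case (Cons y ys)
  then show ?case by (cases i) (auto simp: nth_Cons')
qed simp

lemma dirs_from_signs_inj:
  "length ys = length zs \<Longrightarrow> dirs_from_signs d x ys = dirs_from_signs d x zs \<Longrightarrow> ys = zs"
proof (induction ys arbitrary: zs d x)
  case (Cons y ys)
  then obtain z zs' where "zs = z # zs'" by (cases zs) auto
  with Cons show ?case by auto
qed simp

definition move :: "bool \<Rightarrow> point \<Rightarrow> point" where
  "move b t = (if b then east_of t else north_of t)"

definition step_word :: "point list \<Rightarrow> bool list" where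
  "step_word ts = map (\<lambda>i. ts ! Suc i = east_of (ts ! i)) [0..<length ts - 1]"

lemma length_step_word [simp]: "length (step_word ts) = length ts - 1"
  by (simp add: step_word_def)

lemma nth_step_word: "Suc i < length ts \<Longrightarrow> step_word ts ! i = (ts ! Suc i = east_of (ts ! i))"
  unfolding step_word_def by (subst nth_map) auto

lemma east_of_ne_north_of [simp]: "east_of t \<noteq> north_of t" "north_of t \<noteq> east_of t"
  by (auto simp: east_of_def north_of_def prod_eq_iff)

lemma east_ne_north [simp]: "east t \<noteq> north t" "north t \<noteq> east t"
  by (auto simp: east_def north_def prod_eq_iff)

lemma snake_nth_Suc:
  "snake ts \<Longrightarrow> Suc i < length ts \<Longrightarrow> ts ! Suc i = move (step_word ts ! i) (ts ! i)"
  by (auto simp: snake_def move_def nth_step_word)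

lemma snake_not_Nil: "snake ts \<Longrightarrow> ts \<noteq> []"
  by (simp add: snake_def)

definition lattice_path :: "bool list \<Rightarrow> point list" where
  "lattice_path c = map (\<lambda>i. (int (length (filter id (take i c))), int (length (filter Not (take i c)))))
     [0..<Suc (length c)]"

lemma length_lattice_path [simp]: "length (lattice_path c) = Suc (length c)"
  by (simp add: lattice_path_def)

lemma lattice_path_not_Nil [simp]: "lattice_path c \<noteq> []"
  by (simp add: lattice_path_def del: upt_Suc)

lemma hd_lattice_path: "hd (lattice_path c) = (0, 0)"
  by (simp add: lattice_path_def hd_map del: upt_Suc)

lemma lattice_path_nth_Suc:
  "i < length c \<Longrightarrow> lattice_path c ! Suc i = move (c ! i) (lattice_path c ! i)"
  by (simp add: lattice_path_def take_Suc_conv_app_nth move_def east_of_def north_of_def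
      del: upt_Suc)

lemma snake_lattice_path: "snake (lattice_path c)"
  by (auto simp: snake_def lattice_path_nth_Suc move_def)

lemma step_word_lattice_path: "step_word (lattice_path c) = c"
  by (rule nth_equalityI) (auto simp: nth_step_word lattice_path_nth_Suc move_def)

definition exit_dirs :: "point list \<Rightarrow> edge \<Rightarrow> bool list" where
  "exit_dirs ts ed = step_word ts @ [ed = east (last ts)]"

lemma length_edge_seq: "ts \<noteq> [] \<Longrightarrow> length (edge_seq ts ed) = Suc (length ts)"
  by (simp add: edge_seq_def)

lemma edge_seq_nth_Suc:
  assumes "snake ts" "ed \<in> {north (last ts), east (last ts)}" "i < length ts"
  shows "edge_seq ts ed ! Suc i = (if exit_dirs ts ed ! i then east (ts ! i) else north (ts ! i))"
proof (cases "Suc i < length ts")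
  case True
  then have "i < length ts - 1" by simp
  then have "edge_seq ts ed ! Suc i = shared_edge (ts ! i) (ts ! Suc i)"
    and "exit_dirs ts ed ! i = step_word ts ! i"
    by (simp_all add: edge_seq_def nth_append exit_dirs_def)
  moreover have "ts ! Suc i = move (step_word ts ! i) (ts ! i)"
    using True by (rule snake_nth_Suc[OF assms(1)])
  ultimately show ?thesis
    by (simp add: shared_edge_def move_def)
next
  case False
  then have i: "Suc i = length ts" "ts \<noteq> []" using assms(3) by auto
  then have e: "edge_seq ts ed ! Suc i = ed" by (simp add: edge_seq_def nth_append)
  have l: "ts ! i = last ts" using i by (metis diff_Suc_1 last_conv_nth)
  have "length (step_word ts) = i" using i by simp
  then have x: "exit_dirs ts ed ! i = (ed = east (last ts))"
    by (metis exit_dirs_def nth_append_length)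
  show ?thesis
    using assms(2) unfolding e l x by auto
qed

lemma edge_seq_nth:
  assumes "snake ts" "ed \<in> {north (last ts), east (last ts)}" "i < length ts"
  shows "edge_seq ts ed ! i =
    (if 0 < i \<and> exit_dirs ts ed ! (i - 1) then west (ts ! i) else south (ts ! i))"
proof (cases i)
  case 0
  then show ?thesis using assms(1) by (simp add: edge_seq_def hd_conv_nth snake_def)
next
  case (Suc j)
  then have "j < length (step_word ts)" using assms(3) by simp
  then have "ts ! i = move (exit_dirs ts ed ! j) (ts ! j)"
    using snake_nth_Suc[OF assms(1)] Suc by (simp add: exit_dirs_def nth_append)
  then show ?thesis
    using edge_seq_nth_Suc[OF assms(1,2), of j] Suc assms(3)
    by (simp add: move_def east_def west_def north_def south_def east_of_def north_of_def)
qed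

lemma sign_step:
  assumes "snake ts" "sign_function ts f" "ed \<in> {north (last ts), east (last ts)}" "i < length ts"
  shows "f (edge_seq ts ed ! Suc i) = f (edge_seq ts ed ! i) \<longleftrightarrow>
    exit_dirs ts ed ! i \<noteq> (0 < i \<and> exit_dirs ts ed ! (i - 1))"
proof -
  have "ts ! i \<in> set ts" using assms(4) by simp
  then have "f (north (ts ! i)) = f (west (ts ! i))" "f (south (ts ! i)) = f (east (ts ! i))"
    "f (north (ts ! i)) \<noteq> f (south (ts ! i))"
    using assms(2) by (auto simp: sign_function_def)
  then show ?thesis
    unfolding edge_seq_nth_Suc[OF assms(1,3,4)] edge_seq_nth[OF assms(1,3,4)]
    by (cases "exit_dirs ts ed ! i"; cases "0 < i \<and> exit_dirs ts ed ! (i - 1)") simp_all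
qed

lemma dirs_from_signs_edge_seq:
  assumes "snake ts" "sign_function ts f" "ed \<in> {north (last ts), east (last ts)}"
    and P: "P = map f (edge_seq ts ed)"
  shows "dirs_from_signs False (hd P) (tl P) = exit_dirs ts ed"
proof -
  let ?d = "dirs_from_signs False (hd P) (tl P)" and ?e = "exit_dirs ts ed"
  have ne: "ts \<noteq> []" using assms(1) by (simp add: snake_def)
  have len: "length P = Suc (length ts)" using P length_edge_seq[OF ne] by simp
  have d: "?d ! i = ((0 < i \<and> ?d ! (i - 1)) \<noteq> (P ! i = P ! Suc i))" if "i < length ts" for i
  proof -
    have "hd P # tl P = P" using len by (cases P) auto
    then show ?thesis
      using nth_dirs_from_signs[of i "tl P" False "hd P"] that len by (simp add: nth_tl)
  qed
  have e: "?e ! i = ((0 < i \<and> ?e ! (i - 1)) \<noteq> (P ! i = P ! Suc i))" if "i < length ts" for i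
    using sign_step[OF assms(1-3) that] that len P by auto
  have "?d ! i = ?e ! i" if "i < length ts" for i
    using that
  proof (induction i)
    case 0
    then show ?case using d[of 0] e[of 0] by simp
  next
    case (Suc i)
    then show ?case using d[of "Suc i"] e[of "Suc i"] by simp
  qed
  then show ?thesis
    using len by (intro nth_equalityI) (auto simp: exit_dirs_def ne)
qed

text \<open>An edge whose lower-left endpoint has even coordinate sum gets sign s if it is horizontal
  and the opposite sign if it is vertical; all signs flip at odd endpoints.\<close>
definition checkerboard :: "bool \<Rightarrow> edge \<Rightarrow> bool" where
  "checkerboard s e = (s = (even (fst (fst e) + snd (fst e)) = (fst (fst e) \<noteq> fst (snd e))))"

lemma sign_function_checkerboard: "sign_function ts (checkerboard s)"
  by (auto simp: sign_function_def checkerboard_def north_def south_def east_def west_def)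

lemma snake_with_signs:
  assumes "2 \<le> length P"
  shows "\<exists>ts f ed. snake ts \<and> sign_function ts f \<and> ed \<in> {north (last ts), east (last ts)} \<and>
    map f (edge_seq ts ed) = P"
proof -
  define c where "c = dirs_from_signs False (hd P) (tl P)"
  define ts where "ts = lattice_path (butlast c)"
  define ed where "ed = (if last c then east (last ts) else north (last ts))"
  define Q where "Q = map (checkerboard (hd P)) (edge_seq ts ed)"
  have "length c = length P - 1" by (simp add: c_def)
  then have c_ne: "c \<noteq> []" using assms by auto
  have sn: "snake ts" unfolding ts_def by (rule snake_lattice_path)
  have ed: "ed \<in> {north (last ts), east (last ts)}" by (simp add: ed_def)
  have hd: "hd Q = hd P"
    by (simp add: Q_def edge_seq_def ts_def hd_lattice_path checkerboard_def south_def)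
  have "dirs_from_signs False (hd P) (tl Q) = exit_dirs ts ed"
    unfolding hd[symmetric] by (rule dirs_from_signs_edge_seq[OF sn sign_function_checkerboard ed Q_def])
  also have "\<dots> = butlast c @ [last c]"
  proof -
    have "step_word ts = butlast c"
      unfolding ts_def by (rule step_word_lattice_path)
    moreover have "(ed = east (last ts)) = last c"
      unfolding ed_def by simp
    ultimately show ?thesis
      unfolding exit_dirs_def by (simp only:)
  qed
  also have "\<dots> = c"
    using c_ne by simp
  finally have dirs_Q: "dirs_from_signs False (hd P) (tl Q) = c" .
  have "length Q = length P"
    using assms \<open>length c = length P - 1\<close> by (simp add: Q_def length_edge_seq ts_def)
  have "tl Q = tl P"
  proof (rule dirs_from_signs_inj)
    show "length (tl Q) = length (tl P)" using \<open>length Q = length P\<close> by simp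
    show "dirs_from_signs False (hd P) (tl Q) = dirs_from_signs False (hd P) (tl P)"
      unfolding dirs_Q c_def ..
  qed
  moreover have "Q \<noteq> []" "P \<noteq> []"
    using assms \<open>length Q = length P\<close> by auto
  ultimately have "Q = P"
    using hd by (cases Q; cases P) auto
  then show ?thesis
    using sn sign_function_checkerboard ed unfolding Q_def by blast
qed

lemma is_snake_of_cf_exists:
  assumes "\<forall>x\<in>set a. 0 < x" and "2 \<le> sum_list a"
  shows "\<exists>ts. is_snake_of_cf a ts"
proof -
  have "2 \<le> length (sign_pattern True a)"
    using assms(2) by (simp add: length_sign_pattern)
  then obtain ts f ed where ts: "snake ts" "sign_function ts f" "ed \<in> {north (last ts), east (last ts)}"
    and signs: "map f (edge_seq ts ed) = sign_pattern True a"
    using snake_with_signs by blast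
  have "Suc (length ts) = sum_list a"
    using arg_cong[OF signs, of length] snake_not_Nil[OF ts(1)]
    by (simp add: length_edge_seq length_sign_pattern)
  then have "is_snake_of_cf a ts"
    unfolding is_snake_of_cf_def using ts signs assms(1) snake_not_Nil[OF ts(1)]
    by (intro conjI exI[of _ f] exI[of _ ed] exI[of _ True]) (simp_all add: Suc_le_eq)
  then show ?thesis ..
qed

section \<open>Segments as runs of the step word\<close>

definition runs :: "bool \<Rightarrow> bool list \<Rightarrow> (nat \<times> nat) set" where
  "runs b w = {(j, k). j < k \<and> k \<le> length w \<and> (\<forall>l. j \<le> l \<and> l < k \<longrightarrow> w ! l = b) \<and>
      (j = 0 \<or> w ! (j - 1) \<noteq> b) \<and> (k = length w \<or> w ! k \<noteq> b)}"

lemma segments_eq_runs: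
  assumes "ts \<noteq> []"
    and step: "\<And>l. Suc l < length ts \<Longrightarrow> ts ! Suc l = step (ts ! l) \<longleftrightarrow> step_word ts ! l = b"
  shows "segments step ts = runs b (step_word ts)"
proof -
  let ?w = "step_word ts"
  have "(j, k) \<in> segments step ts \<longleftrightarrow> (j, k) \<in> runs b ?w" for j k
  proof (cases "j < k \<and> k < length ts")
    case True
    have inner: "(\<forall>l. j \<le> l \<and> l < k \<longrightarrow> ts ! Suc l = step (ts ! l)) \<longleftrightarrow>
        (\<forall>l. j \<le> l \<and> l < k \<longrightarrow> ?w ! l = b)"
      using True step by auto
    have start: "(j = 0 \<or> ts ! j \<noteq> step (ts ! (j - 1))) \<longleftrightarrow> (j = 0 \<or> ?w ! (j - 1) \<noteq> b)"
      using True step[of "j - 1"] by (cases j) auto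
    have stop: "(Suc k = length ts \<or> ts ! Suc k \<noteq> step (ts ! k)) \<longleftrightarrow> (k = length ?w \<or> ?w ! k \<noteq> b)"
      using True step[of k] by (cases "Suc k < length ts") auto
    show ?thesis
      unfolding segments_def runs_def mem_Collect_eq prod.case inner start stop
      using True by auto
  next
    case False
    then show ?thesis
      using assms(1) by (auto simp: segments_def runs_def)
  qed
  then show ?thesis by auto
qed

lemma hsegments_eq_runs:
  assumes "snake ts"
  shows "hsegments ts = runs True (step_word ts)"
  unfolding hsegments_def
proof (rule segments_eq_runs[OF snake_not_Nil[OF assms]])
  show "ts ! Suc l = east_of (ts ! l) \<longleftrightarrow> step_word ts ! l = True" if "Suc l < length ts" for l
    using that by (simp add: nth_step_word)
qed

lemma vsegments_eq_runs:
  assumes "snake ts"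
  shows "vsegments ts = runs False (step_word ts)"
  unfolding vsegments_def
proof (rule segments_eq_runs[OF snake_not_Nil[OF assms]])
  show "ts ! Suc l = north_of (ts ! l) \<longleftrightarrow> step_word ts ! l = False" if "Suc l < length ts" for l
    using snake_nth_Suc[OF assms that] by (cases "step_word ts ! l") (simp_all add: move_def)
qed

lemma finite_segments: "finite (segments step ts)"
  by (rule finite_subset[of _ "{..<length ts} \<times> {..<length ts}"]) (auto simp: segments_def)

lemma card_eq_length_seg_list: "finite S \<Longrightarrow> card S = length (seg_list S)"
  by (simp add: seg_list_def)

lemma set_seg_list: "finite S \<Longrightarrow> set (seg_list S) = S"
  by (simp add: seg_list_def)

definition shift_seg :: "nat \<Rightarrow> nat \<times> nat \<Rightarrow> nat \<times> nat" where
  "shift_seg m s = (fst s + m, snd s + m)"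

lemma seg_tiles_shift_seg [simp]: "seg_tiles (shift_seg m s) = seg_tiles s"
  by (simp add: seg_tiles_def shift_seg_def)

lemma shift_seg_shift_seg [simp]: "shift_seg m (shift_seg n s) = shift_seg (n + m) s"
  by (simp add: shift_seg_def)

lemma mem_shift_seg_image:
  "(j, k) \<in> shift_seg m ` S \<longleftrightarrow> m \<le> j \<and> m \<le> k \<and> (j - m, k - m) \<in> S"
  by (force simp: shift_seg_def image_iff)

lemma finite_runs: "finite (runs b w)"
  by (rule finite_subset[of _ "{..length w} \<times> {..length w}"]) (auto simp: runs_def)

lemma runs_Nil [simp]: "runs b [] = {}"
  by (simp add: runs_def)

lemma all_shift_range:
  fixes j k n :: nat
  shows "(\<forall>l. j + n \<le> l \<and> l < k + n \<longrightarrow> P l) \<longleftrightarrow> (\<forall>l. j \<le> l \<and> l < k \<longrightarrow> P (l + n))"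
proof
  assume H: "\<forall>l. j \<le> l \<and> l < k \<longrightarrow> P (l + n)"
  show "\<forall>l. j + n \<le> l \<and> l < k + n \<longrightarrow> P l"
  proof (intro allI impI)
    fix l assume "j + n \<le> l \<and> l < k + n"
    then have "j \<le> l - n" "l - n < k" "l = l - n + n" by auto
    then show "P l" using H by metis
  qed
qed auto

lemma shifted_mem_runs_append:
  assumes "0 < j \<or> v = [] \<or> last v \<noteq> b"
  shows "(j + length v, k + length v) \<in> runs b (v @ w) \<longleftrightarrow> (j, k) \<in> runs b w"
proof -
  let ?n = "length v"
  have inner: "(\<forall>l. j + ?n \<le> l \<and> l < k + ?n \<longrightarrow> (v @ w) ! l = b) \<longleftrightarrow>
      (\<forall>l. j \<le> l \<and> l < k \<longrightarrow> w ! l = b)"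
    unfolding all_shift_range by (simp add: nth_append)
  have start: "(j + ?n = 0 \<or> (v @ w) ! (j + ?n - 1) \<noteq> b) \<longleftrightarrow> (j = 0 \<or> w ! (j - 1) \<noteq> b)"
  proof (cases j)
    case 0
    then show ?thesis using assms by (auto simp: nth_append last_conv_nth)
  next
    case (Suc i)
    then show ?thesis by (simp add: nth_append)
  qed
  have stop: "(k + ?n = length (v @ w) \<or> (v @ w) ! (k + ?n) \<noteq> b) \<longleftrightarrow>
      (k = length w \<or> w ! k \<noteq> b)"
    by (simp add: nth_append)
  show ?thesis
    unfolding runs_def mem_Collect_eq prod.case inner start stop by auto
qed

lemma runs_Cons_other:
  assumes "x \<noteq> b"
  shows "runs b (x # w) = shift_seg 1 ` runs b w"
proof -
  have "(j, k) \<in> runs b (x # w) \<longleftrightarrow> (j, k) \<in> shift_seg 1 ` runs b w" for j k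
  proof (cases j)
    case 0
    then show ?thesis using assms by (auto simp: runs_def mem_shift_seg_image)
  next
    case (Suc i)
    show ?thesis
    proof (cases k)
      case 0
      then show ?thesis by (auto simp: runs_def mem_shift_seg_image)
    next
      case (Suc m)
      then show ?thesis
        using shifted_mem_runs_append[of i "[x]" b m w] assms \<open>j = Suc i\<close>
        by (simp add: mem_shift_seg_image)
    qed
  qed
  then show ?thesis by auto
qed

lemma shift_seg_0 [simp]: "shift_seg 0 s = s"
  by (simp add: shift_seg_def)

lemma runs_replicate_other: "runs b (replicate n (\<not> b) @ w) = shift_seg n ` runs b w"
  by (induction n) (simp_all add: runs_Cons_other image_image)

lemma runs_replicate_append_head:
  assumes "w = [] \<or> hd w \<noteq> b" and jk: "(j, k) \<in> runs b (replicate n b @ w)" and "j < n"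
  shows "j = 0 \<and> k = n"
proof -
  let ?u = "replicate n b @ w"
  have prefix: "?u ! l = b" if "l < n" for l
    using that by (simp add: nth_append)
  have "j = 0"
  proof (rule ccontr)
    assume "j \<noteq> 0"
    then have "?u ! (j - 1) = b" using assms(3) prefix by simp
    then show False using jk \<open>j \<noteq> 0\<close> by (auto simp: runs_def)
  qed
  moreover have "k = n"
  proof (rule ccontr)
    assume "k \<noteq> n"
    then consider "k < n" | "n < k" by linarith
    then show False
    proof cases
      case 1
      then show False using jk prefix[of k] by (auto simp: runs_def)
    next
      case 2
      then have "?u ! n = b" "n < length ?u" using jk \<open>j = 0\<close> by (auto simp: runs_def)
      then show False using assms(1) by (cases w) (auto simp: nth_append)
    qed
  qed
  ultimately show ?thesis ..
qed

lemma runs_replicate_append: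
  assumes "0 < n" and "w = [] \<or> hd w \<noteq> b"
  shows "runs b (replicate n b @ w) = insert (0, n) (shift_seg n ` runs b w)"
proof -
  let ?u = "replicate n b @ w"
  have no_run_at_0: "(0, k) \<notin> runs b w" for k
  proof
    assume "(0, k) \<in> runs b w"
    then have "w \<noteq> []" "w ! 0 = b" by (auto simp: runs_def)
    then show False using assms(2) by (simp add: hd_conv_nth)
  qed
  have shifted: "(i + n, m + n) \<in> runs b ?u \<longleftrightarrow> (i, m) \<in> runs b w" if "0 < i" for i m
    using shifted_mem_runs_append[of i "replicate n b" b m w] that by simp
  have "(j, k) \<in> runs b ?u \<longleftrightarrow> (j, k) \<in> insert (0, n) (shift_seg n ` runs b w)" for j k
  proof
    assume jk: "(j, k) \<in> runs b ?u"
    show "(j, k) \<in> insert (0, n) (shift_seg n ` runs b w)"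
    proof (cases "j < n")
      case True
      then show ?thesis using runs_replicate_append_head[OF assms(2) jk] by simp
    next
      case False
      then have "n \<le> j" "j < k" using jk by (auto simp: runs_def)
      then obtain i m where im: "j = i + n" "k = m + n"
        by (intro that[of "j - n" "k - n"]) simp_all
      have "0 < i"
      proof (rule ccontr)
        assume "\<not> 0 < i"
        then have "?u ! (j - 1) = b" using im assms(1) by (simp add: nth_append)
        then show False using jk im assms(1) \<open>\<not> 0 < i\<close> by (auto simp: runs_def)
      qed
      then show ?thesis using jk shifted by (auto simp: im mem_shift_seg_image)
    qed
  next
    assume "(j, k) \<in> insert (0, n) (shift_seg n ` runs b w)"
    then consider "j = 0" "k = n" | "n \<le> j" "n \<le> k" "(j - n, k - n) \<in> runs b w"
      by (auto simp: mem_shift_seg_image)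
    then show "(j, k) \<in> runs b ?u"
    proof cases
      case 1
      then show ?thesis
        using assms by (cases w) (auto simp: runs_def nth_append)
    next
      case 2
      then have "0 < j - n" using no_run_at_0 by (cases "j - n") auto
      then show ?thesis using shifted[of "j - n" "k - n"] 2 by simp
    qed
  qed
  then show ?thesis by auto
qed

lemma shift_seg_less_shift_seg: "x < y \<Longrightarrow> shift_seg m x < shift_seg m y"
  by (cases x; cases y) (auto simp: shift_seg_def)

lemma seg_list_insert_shift_seg:
  assumes "fst x < m" and "finite S"
  shows "seg_list (insert x (shift_seg m ` S)) = x # map (shift_seg m) (seg_list S)"
proof -
  let ?L = "x # map (shift_seg m) (seg_list S)"
  have "x < shift_seg m s" for s
    using assms(1) by (cases x; cases s) (simp add: shift_seg_def)
  moreover have "sorted_wrt (<) (map (shift_seg m) (seg_list S))"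
    unfolding sorted_wrt_map seg_list_def
    by (rule sorted_wrt_mono_rel[OF _ strict_sorted_list_of_set]) (simp add: shift_seg_less_shift_seg)
  ultimately have "sorted_wrt (<) ?L" by simp
  moreover have "set ?L = insert x (shift_seg m ` S)"
    using assms(2) by (simp add: seg_list_def)
  ultimately show ?thesis
    unfolding seg_list_def
    by (metis sorted_list_of_set.idem_if_sorted_distinct strict_sorted_iff)
qed

section \<open>Zigzag words\<close>

fun zigzag :: "nat list \<Rightarrow> bool list" where
  "zigzag [] = []"
| "zigzag [n] = replicate n True"
| "zigzag (n # m # ns) = replicate n True @ False # False # zigzag (m # ns)"

lemma length_zigzag: "length (zigzag ns) = sum_list ns + 2 * (length ns - 1)"
  by (induction ns rule: zigzag.induct) auto

lemma zigzag_snoc: "ns \<noteq> [] \<Longrightarrow> zigzag (ns @ [n]) = zigzag ns @ False # False # replicate n True"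
  by (induction ns rule: zigzag.induct) auto

lemma rev_zigzag: "rev (zigzag ns) = zigzag (rev ns)"
proof (induction ns rule: zigzag.induct)
  case (3 n m ns)
  then show ?case using zigzag_snoc[of "rev ns @ [m]" n] by simp
qed simp_all

lemma hd_zigzag: "0 < n \<Longrightarrow> hd (zigzag (n # ns)) = True"
  by (cases ns) auto

lemma seg_list_singleton: "seg_list {x} = [x]"
  by (simp add: seg_list_def)

lemma horizontal_runs_zigzag:
  "\<forall>n\<in>set ns. 0 < n \<Longrightarrow> map seg_tiles (seg_list (runs True (zigzag ns))) = map Suc ns"
proof (induction ns rule: zigzag.induct)
  case 1
  then show ?case by (simp add: seg_list_def)
next
  case (2 n)
  then have "runs True (zigzag [n]) = {(0, n)}"
    using runs_replicate_append[of n "[]" True] by simp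
  then show ?case by (simp add: seg_list_singleton seg_tiles_def)
next
  case (3 n m ns)
  have "runs True (zigzag (n # m # ns)) =
      insert (0, n) (shift_seg n ` runs True (False # False # zigzag (m # ns)))"
    using 3 by (simp add: runs_replicate_append)
  also have "\<dots> = insert (0, n) (shift_seg (Suc (Suc n)) ` runs True (zigzag (m # ns)))"
    by (simp add: runs_Cons_other image_image)
  finally show ?case
    using 3 by (simp add: seg_list_insert_shift_seg finite_runs comp_def, simp add: seg_tiles_def)
qed

lemma vertical_runs_zigzag:
  "\<forall>n\<in>set ns. 0 < n \<Longrightarrow>
    map seg_tiles (seg_list (runs False (zigzag ns))) = replicate (length ns - 1) 3"
proof (induction ns rule: zigzag.induct)
  case 1
  then show ?case by (simp add: seg_list_def)
next
  case (2 n)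
  then show ?case
    using runs_replicate_other[of False n "[]"] by (simp add: seg_list_def)
next
  case (3 n m ns)
  have "runs False (replicate 2 False @ zigzag (m # ns)) =
      insert (0, 2) (shift_seg 2 ` runs False (zigzag (m # ns)))"
    using 3 hd_zigzag[of m ns] by (intro runs_replicate_append) auto
  then have "runs False (zigzag (n # m # ns)) =
      insert (n, Suc (Suc n)) (shift_seg (Suc (Suc n)) ` runs False (zigzag (m # ns)))"
    using runs_replicate_other[of False n "replicate 2 False @ zigzag (m # ns)"]
    by (simp add: numeral_2_eq_2 image_image shift_seg_def)
  then show ?case
    using 3 by (simp add: seg_list_insert_shift_seg finite_runs comp_def, simp add: seg_tiles_def)
qed

section \<open>Rotational symmetry\<close>

definition reflect :: "point \<Rightarrow> point \<Rightarrow> point" where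
  "reflect z t = (2 * fst z - fst t, 2 * snd z - snd t)"

lemma rot180_edge_image_tile_edges: "rot180_edge z ` tile_edges t = tile_edges (reflect z t)"
  by (auto simp: tile_edges_def rot180_edge_def rot180_def reflect_def north_def south_def
      east_def west_def)

lemma palindromic_snake_opposite_tiles:
  assumes sn: "snake ts" and pal: "rev (step_word ts) = step_word ts" and i: "i < length ts"
  shows "fst (ts ! i) + fst (ts ! (length ts - 1 - i)) = fst (ts ! 0) + fst (ts ! (length ts - 1)) \<and>
    snd (ts ! i) + snd (ts ! (length ts - 1 - i)) = snd (ts ! 0) + snd (ts ! (length ts - 1))"
  using i
proof (induction i)
  case (Suc i)
  let ?n = "length ts"
  have "ts ! Suc i = move (step_word ts ! i) (ts ! i)"
    using Suc.prems by (intro snake_nth_Suc[OF sn]) simp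
  moreover have "step_word ts ! (?n - 2 - i) = step_word ts ! i"
    using Suc.prems arg_cong[OF pal, of "\<lambda>w. w ! i"] by (simp add: rev_nth)
  then have "ts ! (?n - 1 - i) = move (step_word ts ! i) (ts ! (?n - 1 - Suc i))"
    using snake_nth_Suc[OF sn, of "?n - 1 - Suc i"] Suc.prems
    by (simp add: Suc_diff_Suc numeral_2_eq_2)
  ultimately show ?case
    using Suc by (auto simp: move_def east_of_def north_of_def)
qed simp

lemma rotationally_symmetric_if_palindromic:
  assumes sn: "snake ts" and odd: "odd (length ts)" and pal: "rev (step_word ts) = step_word ts"
  shows "rotationally_symmetric_at_tile ts"
proof -
  let ?n = "length ts"
  note sum_const = palindromic_snake_opposite_tiles[OF sn pal]
  define m where "m = ?n div 2"
  have m: "m < ?n" "?n - 1 - m = m" using odd by (auto simp: m_def elim: oddE)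
  have reflect_nth: "reflect (ts ! m) (ts ! i) = ts ! (?n - 1 - i)" if "i < ?n" for i
    using sum_const[OF that] sum_const[OF m(1)] m(2) by (simp add: reflect_def prod_eq_iff)
  have "reflect (ts ! m) ` set ts = set ts"
  proof
    show "reflect (ts ! m) ` set ts \<subseteq> set ts"
    proof
      fix t assume "t \<in> reflect (ts ! m) ` set ts"
      then obtain i where "i < ?n" "t = reflect (ts ! m) (ts ! i)" by (auto simp: in_set_conv_nth)
      then show "t \<in> set ts" using reflect_nth[of i] by simp
    qed
    show "set ts \<subseteq> reflect (ts ! m) ` set ts"
    proof
      fix t assume "t \<in> set ts"
      then obtain i where i: "i < ?n" "t = ts ! i" by (auto simp: in_set_conv_nth)
      then have "t = reflect (ts ! m) (ts ! (?n - 1 - i))" using reflect_nth[of "?n - 1 - i"] by simp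
      moreover have "ts ! (?n - 1 - i) \<in> set ts" using i by simp
      ultimately show "t \<in> reflect (ts ! m) ` set ts" by blast
    qed
  qed
  then have "rot180_edge (ts ! m) ` snake_edges ts = snake_edges ts"
    unfolding snake_edges_def image_UN rot180_edge_image_tile_edges
    by (metis UN_simps(10))
  then show ?thesis
    unfolding rotationally_symmetric_at_tile_def using m(1) by blast
qed

section \<open>Markov snake graphs\<close>

lemma dirs_from_signs_ones:
  "dirs_from_signs True s (sign_pattern (\<not> s) (replicate (2 * k) 1 @ ys)) =
    replicate (2 * k) True @ dirs_from_signs True s (sign_pattern (\<not> s) ys)"
  by (induction k) (simp_all add: sign_pattern_Cons)

lemma sign_pattern_Cons_2: "sign_pattern s (2 # xs) = s # s # sign_pattern (\<not> s) xs"
  by (simp add: sign_pattern_Cons numeral_2_eq_2)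

lemma dirs_from_signs_markov_block:
  assumes "0 < v"
  shows "dirs_from_signs False (\<not> s) (sign_pattern s (2 # replicate (2 * (v - 1)) 1 @ 2 # ys)) =
    False # replicate (2 * v) True @ False # dirs_from_signs False (\<not> s) (sign_pattern s ys)"
proof -
  obtain k where "v = Suc k" using assms by (cases v) auto
  then show ?thesis
    using dirs_from_signs_ones[of s k "2 # ys"]
    by (simp add: sign_pattern_Cons_2 replicate_app_Cons_same)
qed

lemma dirs_from_signs_markov_blocks:
  assumes "\<forall>v\<in>set vs. 0 < v"
  shows "dirs_from_signs False (\<not> s)
      (sign_pattern s (concat (map (\<lambda>v. [2] @ replicate (2 * (v - 1)) 1 @ [2]) vs))) =
    concat (map (\<lambda>v. False # replicate (2 * v) True @ [False]) vs)"
  using assms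
proof (induction vs)
  case (Cons v vs)
  then show ?case
    using dirs_from_signs_markov_block[of v s "concat (map (\<lambda>v. [2] @ replicate (2 * (v - 1)) 1 @ [2]) vs)"]
    by simp
qed simp

lemma concat_eq_zigzag:
  "ns \<noteq> [] \<Longrightarrow> concat (map (\<lambda>n. False # replicate n True @ [False]) ns) = False # zigzag ns @ [False]"
  by (induction ns rule: zigzag.induct) auto

lemma div_add_diff_div:
  fixes a b p :: nat
  assumes "0 < p"
  shows "(a + b) div p - a div p \<in> {b div p, Suc (b div p)}"
proof -
  have "(a + b) div p = a div p + b div p + (a mod p + b mod p) div p"
    by (rule div_add1_eq)
  moreover have "a mod p < p" "b mod p < p"
    using assms by simp_all
  then have "a mod p + b mod p < 2 * p" by linarith
  then have "(a mod p + b mod p) div p < 2"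
    by (simp add: div_less_iff_less_mult mult.commute assms)
  ultimately show ?thesis by auto
qed

definition markov_vs :: "nat \<Rightarrow> nat \<Rightarrow> nat list" where
  "markov_vs p q = map (markov_v p q) [1..<Suc p]"

lemma length_markov_vs [simp]: "length (markov_vs p q) = p"
  by (simp add: markov_vs_def)

lemma nth_markov_vs: "i < p \<Longrightarrow> markov_vs p q ! i = markov_v p q (Suc i)"
  by (simp add: markov_vs_def del: upt_Suc)

lemma markov_cf_eq_concat:
  "markov_cf p q = concat (map (\<lambda>v. [2] @ replicate (2 * (v - 1)) 1 @ [2]) (markov_vs p q))"
  by (simp add: markov_cf_def markov_vs_def comp_def del: upt_Suc)

locale markov_slope =
  fixes p q :: nat
  assumes p_pos: "0 < p" and p_less_q: "p < q" and coprime_pq: "coprime p q"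
begin

definition v_sum :: "nat \<Rightarrow> nat" where
  "v_sum i = (if i < p then i * q div p else q - 1)"

lemma markov_v_eq_v_sum: "1 \<le> i \<Longrightarrow> i \<le> p \<Longrightarrow> markov_v p q i = v_sum i - v_sum (i - 1)"
  by (auto simp: markov_v_def v_sum_def)

lemma v_sum_less_Suc: "i < p \<Longrightarrow> v_sum i < v_sum (Suc i)"
proof (cases "Suc i < p")
  case True
  have "(i * q + p) div p \<le> (i * q + q) div p"
    using p_less_q by (intro div_le_mono) simp
  moreover have "(i * q + p) div p = i * q div p + 1"
    using p_pos div_add_self2[of p "i * q"] by simp
  ultimately show ?thesis
    using True by (simp add: v_sum_def add.commute)
next
  case False
  assume "i < p"
  then have "p = Suc i" using False by simp
  then have "i * q < p * (q - 1)"
    using p_less_q by (simp add: algebra_simps diff_mult_distrib2)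
  then have "i * q div p < q - 1"
    using p_pos by (simp add: div_less_iff_less_mult mult.commute)
  then show ?thesis
    using False \<open>i < p\<close> by (simp add: v_sum_def)
qed

text \<open>The only use of coprimality: p does not divide i q for 0 < i < p.\<close>
lemma v_sum_complement: "i \<le> p \<Longrightarrow> v_sum i + v_sum (p - i) = q - 1"
proof (cases "i = 0 \<or> i = p")
  case True
  then show ?thesis using p_pos by (auto simp: v_sum_def)
next
  case False
  assume "i \<le> p"
  then have i: "0 < i" "i < p" using False by auto
  have "\<not> p dvd i * q"
  proof
    assume "p dvd i * q"
    then have "p dvd i" using coprime_pq by (simp add: coprime_dvd_mult_left_iff)
    then show False using i by (auto dest: dvd_imp_le)
  qed
  then have r: "0 < i * q mod p" "i * q mod p < p"
    using p_pos by (auto simp: mod_greater_zero_iff_not_dvd)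
  have t: "i * q div p < q"
    using i p_less_q by (simp add: div_less_iff_less_mult)
  define d where "d = i * q div p"
  have "p * q = p * ((q - 1 - d) + d + 1)"
    using t by (simp add: d_def)
  also have "\<dots> = p * (q - 1 - d) + p * d + p"
    by (simp add: distrib_left)
  finally have pq: "p * q = p * (q - 1 - d) + p * d + p" .
  have "i * q = p * d + i * q mod p"
    by (simp add: d_def)
  then have "(p - i) * q = p * (q - 1 - d) + (p - i * q mod p)"
    using pq r(2) by (simp add: diff_mult_distrib)
  then have "(p - i) * q div p = q - 1 - d"
    using r by (intro div_nat_eqI) auto
  then show ?thesis
    using i t by (simp add: v_sum_def d_def)
qed

lemma markov_v_pos: "1 \<le> i \<Longrightarrow> i \<le> p \<Longrightarrow> 0 < markov_v p q i"
  using v_sum_less_Suc[of "i - 1"] by (simp add: markov_v_eq_v_sum)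

lemma markov_v_symmetric: "1 \<le> i \<Longrightarrow> i \<le> p \<Longrightarrow> markov_v p q (p + 1 - i) = markov_v p q i"
proof -
  assume i: "1 \<le> i" "i \<le> p"
  have "v_sum (i - 1) + v_sum (p + 1 - i) = q - 1"
    using v_sum_complement[of "i - 1"] i by (simp add: Suc_diff_le)
  moreover have "v_sum i + v_sum (p - i) = q - 1"
    using v_sum_complement[of i] i by simp
  moreover have "v_sum (i - 1) \<le> v_sum i"
    using v_sum_less_Suc[of "i - 1"] i by (simp add: less_imp_le)
  moreover have "markov_v p q (p + 1 - i) = v_sum (p + 1 - i) - v_sum (p - i)"
    using markov_v_eq_v_sum[of "p + 1 - i"] i by (simp add: Suc_diff_le)
  ultimately show ?thesis
    using markov_v_eq_v_sum[of i] i by linarith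
qed

lemma markov_v_cases: "1 \<le> i \<Longrightarrow> i < p \<Longrightarrow> markov_v p q i \<in> {q div p, Suc (q div p)}"
  using div_add_diff_div[OF p_pos, of "(i - 1) * q" q]
  by (cases i) (simp_all add: markov_v_def add.commute)

lemma markov_v_balanced:
  assumes "i \<in> {1..p}" and "j \<in> {1..p}"
  shows "\<bar>int (markov_v p q i) - int (markov_v p q j)\<bar> \<le> 1"
proof (cases "p = 1")
  case False
  have "markov_v p q k \<in> {q div p, Suc (q div p)}" if "k \<in> {1..p}" for k
  proof (cases "k < p")
    case True
    then show ?thesis using that markov_v_cases[of k] by simp
  next
    case False
    then have "markov_v p q k = markov_v p q 1"
      using that markov_v_symmetric[of 1] by simp
    then show ?thesis using \<open>p \<noteq> 1\<close> p_pos markov_v_cases[of 1] by simp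
  qed
  then have "markov_v p q i \<in> {q div p, Suc (q div p)}" "markov_v p q j \<in> {q div p, Suc (q div p)}"
    using assms by blast+
  then show ?thesis by auto
qed (use assms in simp)

lemma markov_vs_pos: "\<forall>v\<in>set (markov_vs p q). 0 < v"
  by (auto simp: markov_vs_def markov_v_pos)

lemma rev_markov_vs: "rev (markov_vs p q) = markov_vs p q"
proof (rule nth_equalityI)
  fix i assume "i < length (rev (markov_vs p q))"
  then have i: "i < p" by simp
  then have "rev (markov_vs p q) ! i = markov_v p q (p + 1 - Suc i)"
    by (simp add: rev_nth nth_markov_vs Suc_diff_Suc)
  also have "\<dots> = markov_vs p q ! i"
    using i markov_v_symmetric[of "Suc i"] by (simp add: nth_markov_vs)
  finally show "rev (markov_vs p q) ! i = markov_vs p q ! i" .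
qed simp

lemma markov_vs_not_Nil: "markov_vs p q \<noteq> []"
  using p_pos by (simp add: markov_vs_def)

lemma markov_snake_exists: "\<exists>ts. markov_snake p q ts"
  unfolding markov_snake_def
proof (rule is_snake_of_cf_exists)
  show "\<forall>x\<in>set (markov_cf p q). 0 < x"
    by (auto simp: markov_cf_def)
  obtain v vs where "markov_vs p q = v # vs"
    using markov_vs_not_Nil by (cases "markov_vs p q") auto
  then show "2 \<le> sum_list (markov_cf p q)"
    by (simp add: markov_cf_eq_concat)
qed

lemma markov_snake_step_word:
  assumes "markov_snake p q ts"
  shows "snake ts \<and> step_word ts = zigzag (map (\<lambda>v. 2 * v) (markov_vs p q))"
proof -
  obtain f ed s where sn: "snake ts" and sf: "sign_function ts f"
    and ed: "ed \<in> {north (last ts), east (last ts)}"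
    and signs: "map f (edge_seq ts ed) = sign_pattern s (markov_cf p q)"
    using assms unfolding markov_snake_def is_snake_of_cf_def by blast
  let ?ns = "map (\<lambda>v. 2 * v) (markov_vs p q)"
  obtain v vs where "markov_vs p q = v # vs"
    using markov_vs_not_Nil by (cases "markov_vs p q") auto
  then obtain P where P: "sign_pattern s (markov_cf p q) = s # P"
    by (simp add: markov_cf_eq_concat sign_pattern_Cons_2)
  have "False # dirs_from_signs False s P =
      dirs_from_signs False (\<not> s) (sign_pattern s (markov_cf p q))"
    by (simp add: P)
  also have "\<dots> = False # zigzag ?ns @ [False]"
    using dirs_from_signs_markov_blocks[OF markov_vs_pos, of s] concat_eq_zigzag[of ?ns]
      markov_vs_not_Nil
    by (simp add: markov_cf_eq_concat comp_def)
  finally have "dirs_from_signs False s P = zigzag ?ns @ [False]" by simp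
  moreover have "dirs_from_signs False s P = step_word ts @ [ed = east (last ts)]"
    using dirs_from_signs_edge_seq[OF sn sf ed signs[symmetric]] P by (simp add: exit_dirs_def)
  ultimately show ?thesis using sn by simp
qed

lemma markov_snake_rotationally_symmetric:
  assumes "markov_snake p q ts"
  shows "rotationally_symmetric_at_tile ts"
proof -
  have sn: "snake ts" and w: "step_word ts = zigzag (map (\<lambda>v. 2 * v) (markov_vs p q))"
    using markov_snake_step_word[OF assms] by auto
  have "length ts = Suc (length (step_word ts))"
    using snake_not_Nil[OF sn] by simp
  then have "odd (length ts)"
    by (simp add: w length_zigzag sum_list_const_mult)
  moreover have "rev (step_word ts) = step_word ts"
    by (simp add: w rev_zigzag rev_map rev_markov_vs)
  ultimately show ?thesis
    using sn by (intro rotationally_symmetric_if_palindromic)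
qed

lemma markov_snake_hsegments:
  assumes "markov_snake p q ts"
  shows "map seg_tiles (seg_list (hsegments ts)) = map (\<lambda>v. 2 * v + 1) (markov_vs p q)"
  using markov_snake_step_word[OF assms] markov_vs_pos
    horizontal_runs_zigzag[of "map (\<lambda>v. 2 * v) (markov_vs p q)"]
  by (simp add: hsegments_eq_runs comp_def)

lemma markov_snake_vsegments:
  assumes "markov_snake p q ts"
  shows "map seg_tiles (seg_list (vsegments ts)) = replicate (p - 1) 3"
  using markov_snake_step_word[OF assms] markov_vs_pos
    vertical_runs_zigzag[of "map (\<lambda>v. 2 * v) (markov_vs p q)"]
  by (simp add: vsegments_eq_runs)

lemma markov_snake_card_hsegments: "markov_snake p q ts \<Longrightarrow> card (hsegments ts) = p"
  using arg_cong[OF markov_snake_hsegments, of ts length]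
  by (simp add: card_eq_length_seg_list finite_segments hsegments_def)

lemma markov_snake_hsegment_tiles:
  assumes "markov_snake p q ts" and "i \<in> {1..p}"
  shows "seg_tiles (seg_list (hsegments ts) ! (i - 1)) = 2 * (markov_v p q i - 1) + 3"
proof -
  have i: "i - 1 < p" "Suc (i - 1) = i" using assms(2) by auto
  have "length (seg_list (hsegments ts)) = p"
    using arg_cong[OF markov_snake_hsegments[OF assms(1)], of length] by simp
  then have "seg_tiles (seg_list (hsegments ts) ! (i - 1)) = 2 * markov_v p q i + 1"
    using arg_cong[OF markov_snake_hsegments[OF assms(1)], of "\<lambda>l. l ! (i - 1)"] i
    by (simp add: nth_markov_vs)
  then show ?thesis
    using markov_v_pos[of i] assms(2) by simp
qed

lemma markov_snake_card_vsegments: "markov_snake p q ts \<Longrightarrow> card (vsegments ts) = p - 1"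
  using arg_cong[OF markov_snake_vsegments, of ts length]
  by (simp add: card_eq_length_seg_list finite_segments vsegments_def)

lemma markov_snake_vsegment_tiles: "markov_snake p q ts \<Longrightarrow> s \<in> vsegments ts \<Longrightarrow> seg_tiles s = 3"
  using arg_cong[OF markov_snake_vsegments, of ts set]
  by (auto simp: set_seg_list finite_segments vsegments_def)

end

theorem corollary4p2:
  fixes p q :: nat
  assumes "0 < p" and "p < q" and "coprime p q"
  shows "(\<exists>ts. markov_snake p q ts) \<and>
    (\<forall>ts. markov_snake p q ts \<longrightarrow>
       rotationally_symmetric_at_tile ts \<and>
       card (hsegments ts) = p \<and>
       (\<exists>\<nu> :: nat \<Rightarrow> nat.
          (\<forall>i\<in>{1..p}. 0 < \<nu> i) \<and>
          (\<forall>i\<in>{1..p}. \<forall>j\<in>{1..p}. i \<noteq> j \<longrightarrow> \<bar>int (\<nu> i) - int (\<nu> j)\<bar> \<le> 1) \<and>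
          (\<forall>i\<in>{1..p}. seg_tiles (seg_list (hsegments ts) ! (i - 1)) = 2 * (\<nu> i - 1) + 3)) \<and>
       card (vsegments ts) = p - 1 \<and>
       (\<forall>s\<in>vsegments ts. seg_tiles s = 3))"
proof -
  interpret markov_slope p q
    using assms by unfold_locales
  show ?thesis
  proof (intro conjI allI impI)
    show "\<exists>ts. markov_snake p q ts" by (rule markov_snake_exists)
  next
    fix ts assume ts: "markov_snake p q ts"
    show "rotationally_symmetric_at_tile ts" using ts by (rule markov_snake_rotationally_symmetric)
    show "card (hsegments ts) = p" using ts by (rule markov_snake_card_hsegments)
    show "card (vsegments ts) = p - 1" using ts by (rule markov_snake_card_vsegments)
    show "\<forall>s\<in>vsegments ts. seg_tiles s = 3" using ts by (blast intro: markov_snake_vsegment_tiles)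
    show "\<exists>\<nu>. (\<forall>i\<in>{1..p}. 0 < \<nu> i) \<and>
        (\<forall>i\<in>{1..p}. \<forall>j\<in>{1..p}. i \<noteq> j \<longrightarrow> \<bar>int (\<nu> i) - int (\<nu> j)\<bar> \<le> 1) \<and>
        (\<forall>i\<in>{1..p}. seg_tiles (seg_list (hsegments ts) ! (i - 1)) = 2 * (\<nu> i - 1) + 3)"
      using markov_v_pos markov_v_balanced markov_snake_hsegment_tiles[OF ts]
      by (intro exI[of _ "markov_v p q"]) simp
  qed
qed

end
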